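(* Let $n\ge3$ and let $G$ be a spanning subgraph of $CT_n$. Then $$\sum_{x\in\mathrm{S}_n}\sum_{i=0}^{n} e(G_x^i)\ \ge\ \sum_{w\in V(G)}\binom{d_G(w)}{2}.$$
   Context: $\mathrm{S}_n$ is the symmetric group on $\{1,\dots,n\}$; $\mathrm{supp}(x)=\{i:i^x\ne i\}$. $CT_n$ has vertex set $\mathrm{S}_n$, with $\{x,y\}$ an edge iff $yx^{-1}$ is a transposition; the support of an edge $\{u,z\}$ is $\mathrm{supp}(\{u,z\})=\mathrm{supp}(zu^{-1})$. Let $\mathscr F_0$ be the set of all transpositions of $\mathrm{S}_n$ and, for $i\in\{1,\dots,n\}$, $\mathscr F_i=\{y\in\mathscr F_0: i\in\mathrm{supp}(y)\}$. Set $\delta_0=0$ and $\delta_i=1$ for $i\ge1$. For a spanning subgraph $G$ of $CT_n$, $i\in\{0,\dots,n\}$ and $x\in\mathrm{S}_n$, the graph $G_x^i$ has vertex set $\{yx: y\in\mathscr F_i\}$, and two vertices $u,z$ of it are adjacent iff $|\mathrm{supp}(\{x,u\})\cap\mathrm{supp}(\{x,z\})|=\delta_i$ and there is a vertex $w\ne x$ such that $(u,w,z)$ is a $2$-path in $G$. $d_G(w)$ is the degree of $w$ in $G$. *)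

theory Defs
  imports "HOL-Combinatorics.Combinatorics"
begin

text \<open>We use the right-action convention i^(xy) = (i^x)^y,
so the product x y is the function composition y o x.\<close>

definition Sn :: "nat \<Rightarrow> (nat \<Rightarrow> nat) set" where
  "Sn n = {p. p permutes {1..n}}"

definition pmul :: "(nat \<Rightarrow> nat) \<Rightarrow> (nat \<Rightarrow> nat) \<Rightarrow> (nat \<Rightarrow> nat)" where
  "pmul a b = b \<circ> a"

definition psupp :: "(nat \<Rightarrow> nat) \<Rightarrow> nat set" where
  "psupp p = {i. p i \<noteq> i}"

definition transps :: "nat \<Rightarrow> (nat \<Rightarrow> nat) set" where
  "transps n = {transpose a b | a b. a \<in> {1..n} \<and> b \<in> {1..n} \<and> a \<noteq> b}"

definition Fam :: "nat \<Rightarrow> nat \<Rightarrow> (nat \<Rightarrow> nat) set" where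
  "Fam n i = (if i = 0 then transps n else {y \<in> transps n. i \<in> psupp y})"

definition delta :: "nat \<Rightarrow> nat" where
  "delta i = (if i = 0 then 0 else 1)"

definition CT_edges :: "nat \<Rightarrow> (nat \<Rightarrow> nat) set set" where
  "CT_edges n = {{x, y} | x y. x \<in> Sn n \<and> y \<in> Sn n \<and> pmul y (inv x) \<in> transps n}"

definition esupp :: "(nat \<Rightarrow> nat) \<Rightarrow> (nat \<Rightarrow> nat) \<Rightarrow> nat set" where
  "esupp u z = psupp (pmul z (inv u))"

text \<open>A spanning subgraph of CT_n: vertex set Sn n, edge set a subset of CT_edges n.\<close>
definition spanning_subgraph :: "nat \<Rightarrow> (nat \<Rightarrow> nat) set set \<Rightarrow> bool" where
  "spanning_subgraph n E \<longleftrightarrow> E \<subseteq> CT_edges n"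

definition deg :: "(nat \<Rightarrow> nat) set set \<Rightarrow> (nat \<Rightarrow> nat) \<Rightarrow> nat" where
  "deg E w = card {e \<in> E. w \<in> e}"

definition two_path :: "(nat \<Rightarrow> nat) set set \<Rightarrow> (nat \<Rightarrow> nat) \<Rightarrow> (nat \<Rightarrow> nat) \<Rightarrow> (nat \<Rightarrow> nat) \<Rightarrow> bool" where
  "two_path E u w z \<longleftrightarrow> u \<noteq> w \<and> w \<noteq> z \<and> u \<noteq> z \<and> {u, w} \<in> E \<and> {w, z} \<in> E"

definition Gx_vertices :: "nat \<Rightarrow> nat \<Rightarrow> (nat \<Rightarrow> nat) \<Rightarrow> (nat \<Rightarrow> nat) set" where
  "Gx_vertices n i x = {pmul y x | y. y \<in> Fam n i}"

definition Gx_edges :: "(nat \<Rightarrow> nat) set set \<Rightarrow> nat \<Rightarrow> nat \<Rightarrow> (nat \<Rightarrow> nat) \<Rightarrow> (nat \<Rightarrow> nat) set set" where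
  "Gx_edges E n i x = {{u, z} | u z. u \<in> Gx_vertices n i x \<and> z \<in> Gx_vertices n i x \<and> u \<noteq> z
      \<and> card (esupp x u \<inter> esupp x z) = delta i
      \<and> (\<exists>w \<in> Sn n. w \<noteq> x \<and> two_path E u w z)}"

end

theory Submission
  imports Defs
begin

text \<open>Let u and z be distinct neighbours of w in G, so u = w t and z = w t' as functions
for distinct transpositions t, t'. The permutation x = w t t' satisfies u = x t' and
z = x (t' t t'), so u and z are both vertices of the graphs G_x^i, and their edge supports at x
are the supports of the distinct transpositions t' and t' t t', which share at most one point i.
Hence (u, w, z) makes {u, z} an edge of G_x^0 or of G_x^i. Since w is determined by x, u and z,
this assigns to every pair of neighbours of every vertex a different edge of some G_x^i.\<close>

lemma Sn_bij: "w \<in> Sn n \<Longrightarrow> bij w"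
  by (simp add: Sn_def permutes_bij)

lemma finite_Sn: "finite (Sn n)"
  unfolding Sn_def by (rule finite_permutations) simp

lemma finite_transps: "finite (transps n)"
proof -
  have "transps n \<subseteq> (\<lambda>(a, b). transpose a b) ` ({1..n} \<times> {1..n})"
    unfolding transps_def by auto
  then show ?thesis by (rule finite_subset) simp
qed

lemma psupp_transpose: "a \<noteq> b \<Longrightarrow> psupp (transpose a b) = {a, b}"
  by (auto simp: psupp_def transpose_def)

lemma psupp_transps_subset: "t \<in> transps n \<Longrightarrow> psupp t \<subseteq> {1..n}"
  by (auto simp: transps_def psupp_transpose)

lemma transps_permutes: "t \<in> transps n \<Longrightarrow> t permutes {1..n}"
  by (auto simp: transps_def intro: permutes_swap_id)

lemma transps_involutory: "t \<in> transps n \<Longrightarrow> t (t a) = a"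
  by (auto simp: transps_def)

lemma transps_conj:
  assumes "s \<in> transps n" "t \<in> transps n"
  shows "s \<circ> t \<circ> s \<in> transps n"
proof -
  obtain a b c d where s: "s = transpose a b" "a \<in> {1..n}" "b \<in> {1..n}"
    and t: "t = transpose c d" "c \<in> {1..n}" "d \<in> {1..n}" "c \<noteq> d"
    using assms unfolding transps_def by blast
  have "t \<circ> s = s \<circ> transpose (s c) (s d)"
    using transpose_comp_eq[of s c d] by (simp add: s(1) t(1))
  then have "s \<circ> t \<circ> s = (s \<circ> s) \<circ> transpose (s c) (s d)"
    by (simp add: comp_assoc)
  also have "\<dots> = transpose (s c) (s d)"
    by (simp add: s(1))
  finally show ?thesis
    using s t unfolding transps_def by (force simp: transpose_def)
qed

lemma card_psupp_Int_transps_le: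
  assumes "s \<in> transps n" "t \<in> transps n" "s \<noteq> t"
  shows "card (psupp s \<inter> psupp t) \<le> 1"
proof -
  obtain a b c d where s: "s = transpose a b" "a \<noteq> b" and t: "t = transpose c d" "c \<noteq> d"
    using assms(1,2) unfolding transps_def by blast
  have "{a, b} \<noteq> {c, d}"
    using assms(3) by (auto simp: s t doubleton_eq_iff transpose_commute)
  then have "card ({a, b} \<inter> {c, d}) \<le> 1"
    by (auto simp: card_le_Suc0_iff_eq doubleton_eq_iff)
  then show ?thesis
    by (simp add: s t psupp_transpose)
qed

lemma comp_transps_neq:
  assumes "bij w" "t \<in> transps n"
  shows "w \<circ> t \<noteq> w"
proof -
  obtain a b where "t = transpose a b" "a \<noteq> b"
    using assms(2) unfolding transps_def by blast
  then have "w (t a) \<noteq> w a"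
    using assms(1) by (simp add: bij_is_inj inj_eq)
  then show ?thesis
    by (metis comp_apply)
qed

lemma esupp_comp: "bij x \<Longrightarrow> esupp x (x \<circ> y) = psupp y"
  by (simp add: esupp_def pmul_def o_assoc bij_is_inj)

lemma CT_edges_comp_transps:
  assumes "{w, v} \<in> CT_edges n"
  shows "w \<in> Sn n \<and> v \<in> Sn n \<and> (\<exists>t\<in>transps n. v = w \<circ> t)"
proof -
  obtain x y t where xy: "{w, v} = {x, y}" "x \<in> Sn n" "y \<in> Sn n"
    and t: "t \<in> transps n" "inv x \<circ> y = t"
    using assms unfolding CT_edges_def pmul_def by auto
  have "x \<circ> inv x = id"
    using Sn_bij[OF xy(2)] bij_is_surj surj_iff by blast
  then have y: "y = x \<circ> t"
    by (simp flip: t(2) comp_assoc)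
  have x: "x = y \<circ> t"
    by (simp add: y fun_eq_iff transps_involutory[OF t(1)])
  have "w = x \<and> v = y \<or> w = y \<and> v = x"
    using xy(1) by (simp add: doubleton_eq_iff)
  then show ?thesis
    using xy(2,3) t(1) x y by blast
qed

definition neighbours :: "(nat \<Rightarrow> nat) set set \<Rightarrow> (nat \<Rightarrow> nat) \<Rightarrow> (nat \<Rightarrow> nat) set" where
  "neighbours E w = {v. {w, v} \<in> E}"

lemma neighboursD:
  assumes "spanning_subgraph n E" "v \<in> neighbours E w"
  shows "w \<in> Sn n \<and> v \<in> Sn n \<and> (\<exists>t\<in>transps n. v = w \<circ> t)"
  using assms CT_edges_comp_transps unfolding spanning_subgraph_def neighbours_def by blast

lemma neighbour_neq:
  assumes "spanning_subgraph n E" "v \<in> neighbours E w"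
  shows "v \<noteq> w"
  using neighboursD[OF assms] comp_transps_neq Sn_bij by metis

lemma finite_neighbours: "spanning_subgraph n E \<Longrightarrow> finite (neighbours E w)"
  using neighboursD finite_Sn by (metis finite_subset subsetI)

lemma deg_eq_card_neighbours:
  assumes "spanning_subgraph n E"
  shows "deg E w = card (neighbours E w)"
proof -
  have "{e \<in> E. w \<in> e} = (\<lambda>v. {w, v}) ` neighbours E w"
  proof (intro equalityI subsetI)
    fix e assume e: "e \<in> {e \<in> E. w \<in> e}"
    then obtain x y where "e = {x, y}"
      using assms unfolding spanning_subgraph_def CT_edges_def by auto
    with e show "e \<in> (\<lambda>v. {w, v}) ` neighbours E w"
      unfolding neighbours_def by (auto simp: insert_commute)
  qed (auto simp: neighbours_def)
  moreover have "inj_on (\<lambda>v. {w, v}) (neighbours E w)"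
    using neighbour_neq[OF assms] by (auto simp: inj_on_def doubleton_eq_iff)
  ultimately show ?thesis
    unfolding deg_def by (simp add: card_image)
qed

lemma exists_Gx_edge:
  assumes x: "bij x" and y: "y \<in> transps n" "y' \<in> transps n" "y \<noteq> y'"
    and w: "w \<in> Sn n" "w \<noteq> x" "two_path E (x \<circ> y) w (x \<circ> y')"
  shows "\<exists>i\<in>{0..n}. {x \<circ> y, x \<circ> y'} \<in> Gx_edges E n i x"
proof -
  let ?I = "psupp y \<inter> psupp y'"
  have edge: "{x \<circ> y, x \<circ> y'} \<in> Gx_edges E n i x"
    if "y \<in> Fam n i" "y' \<in> Fam n i" "card ?I = delta i" for i
  proof -
    have "x \<circ> y \<in> Gx_vertices n i x" "x \<circ> y' \<in> Gx_vertices n i x"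
      using that(1,2) unfolding Gx_vertices_def pmul_def by blast+
    moreover have "card (esupp x (x \<circ> y) \<inter> esupp x (x \<circ> y')) = delta i"
      using that(3) by (simp add: esupp_comp x)
    moreover have "x \<circ> y \<noteq> x \<circ> y'"
      using w(3) by (simp add: two_path_def)
    ultimately show ?thesis
      using w unfolding Gx_edges_def by blast
  qed
  have "finite ?I"
    using psupp_transps_subset[OF y(1)] finite_subset by blast
  moreover have "card ?I \<le> 1"
    using card_psupp_Int_transps_le[OF y] .
  ultimately consider "?I = {}" | i where "?I = {i}"
    by (metis One_nat_def card_le_Suc0_iff_eq equals0I insertI1 subsetI subset_singletonD)
  then show ?thesis
  proof cases
    case 1
    then have "{x \<circ> y, x \<circ> y'} \<in> Gx_edges E n 0 x"
      using y by (intro edge) (simp_all add: Fam_def delta_def)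
    then show ?thesis
      by auto
  next
    case (2 i)
    then have "i \<in> {1..n}"
      using psupp_transps_subset[OF y(1)] by blast
    then have "{x \<circ> y, x \<circ> y'} \<in> Gx_edges E n i x"
      using y 2 by (intro edge) (auto simp: Fam_def delta_def)
    with \<open>i \<in> {1..n}\<close> show ?thesis
      by auto
  qed
qed

lemma neighbour_pair_Gx_edge:
  assumes sp: "spanning_subgraph n E"
    and u: "u \<in> neighbours E w" and z: "z \<in> neighbours E w" and "u \<noteq> z"
  shows "u \<circ> inv w \<circ> z \<in> Sn n \<and> (\<exists>i\<in>{0..n}. {u, z} \<in> Gx_edges E n i (u \<circ> inv w \<circ> z))"
proof -
  obtain t t' where w: "w \<in> Sn n" and t: "t \<in> transps n" "u = w \<circ> t"
    and t': "t' \<in> transps n" "z = w \<circ> t'"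
    using neighboursD[OF sp u] neighboursD[OF sp z] by blast
  have inj_w: "inj w"
    using Sn_bij[OF w] bij_is_inj by blast
  define x where "x = w \<circ> t \<circ> t'"
  have x_eq: "u \<circ> inv w \<circ> z = x"
    by (simp add: fun_eq_iff t t' x_def inv_f_f[OF inj_w])
  have x_Sn: "x \<in> Sn n"
    using w transps_permutes[OF t(1)] transps_permutes[OF t'(1)]
    unfolding x_def Sn_def by (auto intro: permutes_compose)
  have u_eq: "u = x \<circ> t'" and z_eq: "z = x \<circ> (t' \<circ> t \<circ> t')"
    by (simp_all add: fun_eq_iff x_def t t' transps_involutory[OF t(1)] transps_involutory[OF t'(1)])
  have "t \<noteq> t'"
    using \<open>u \<noteq> z\<close> t t' by blast
  then have "t' \<noteq> t' \<circ> t \<circ> t'"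
    by (metis (no_types, opaque_lifting) comp_apply fun_eq_iff transps_involutory[OF t'(1)])
  moreover have "w \<noteq> x"
    using \<open>t \<noteq> t'\<close> inj_w unfolding x_def
    by (metis (no_types, opaque_lifting) comp_apply fun_eq_iff injD transps_involutory[OF t'(1)])
  moreover have "two_path E u w z"
    using u z \<open>u \<noteq> z\<close> neighbour_neq[OF sp u] neighbour_neq[OF sp z]
    unfolding two_path_def neighbours_def by (auto simp: insert_commute)
  ultimately have "\<exists>i\<in>{0..n}. {u, z} \<in> Gx_edges E n i x"
    unfolding u_eq z_eq
    using exists_Gx_edge Sn_bij[OF x_Sn] t'(1) transps_conj[OF t'(1) t(1)] w by blast
  with x_eq x_Sn show ?thesis
    by simp
qed

lemma finite_Gx_edges: "finite (Gx_edges E n i x)"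
proof -
  have "Gx_vertices n i x \<subseteq> (\<lambda>y. pmul y x) ` transps n"
    unfolding Gx_vertices_def Fam_def by auto
  then have "finite (Gx_vertices n i x)"
    using finite_transps finite_surj by blast
  moreover have "Gx_edges E n i x \<subseteq> Pow (Gx_vertices n i x)"
    unfolding Gx_edges_def by auto
  ultimately show ?thesis
    by (meson finite_Pow_iff finite_subset)
qed

definition split_pair :: "'a set \<Rightarrow> 'a \<times> 'a" where
  "split_pair S = (SOME (u, z). u \<noteq> z \<and> S = {u, z})"

lemma split_pair:
  assumes "card S = 2" "split_pair S = (u, z)"
  shows "u \<noteq> z \<and> S = {u, z}"
proof -
  obtain a b where "S = {a, b}" "a \<noteq> b"
    using assms(1) unfolding card_2_iff by blast
  then have "\<exists>p. case p of (u, z) \<Rightarrow> u \<noteq> z \<and> S = {u, z}"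
    by (intro exI[of _ "(a, b)"]) simp
  from someI_ex[OF this] have "case split_pair S of (u, z) \<Rightarrow> u \<noteq> z \<and> S = {u, z}"
    unfolding split_pair_def .
  then show ?thesis
    unfolding assms(2) by simp
qed

definition pair_centre :: "(nat \<Rightarrow> nat) \<Rightarrow> (nat \<Rightarrow> nat) set \<Rightarrow> nat \<Rightarrow> nat" where
  "pair_centre w S = (case split_pair S of (u, z) \<Rightarrow> u \<circ> inv w \<circ> z)"

lemma comp_cancel_bij:
  assumes "bij u" "bij z" "u \<circ> a \<circ> z = u \<circ> b \<circ> z"
  shows "a = b"
proof
  fix c
  have "u (a (z (inv z c))) = u (b (z (inv z c)))"
    using assms(3) by (metis comp_apply)
  then show "a c = b c"
    using assms(1,2) by (simp add: bij_is_inj bij_is_surj inj_eq surj_f_inv_f)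
qed

lemma card_neighbour_pairs_le:
  assumes sp: "spanning_subgraph n E"
  shows "card (SIGMA w:Sn n. {S. S \<subseteq> neighbours E w \<and> card S = 2})
    \<le> card (SIGMA x:Sn n. \<Union>i\<in>{0..n}. Gx_edges E n i x)"
proof (rule card_inj_on_le[where f = "\<lambda>(w, S). (pair_centre w S, S)"])
  show "inj_on (\<lambda>(w, S). (pair_centre w S, S)) (SIGMA w:Sn n. {S. S \<subseteq> neighbours E w \<and> card S = 2})"
  proof (rule inj_onI, clarsimp)
    fix w w' S
    assume w: "w \<in> Sn n" "w' \<in> Sn n" and S: "S \<subseteq> neighbours E w" "card S = 2"
      and eq: "pair_centre w S = pair_centre w' S"
    obtain u z where uz: "split_pair S = (u, z)"
      by fastforce
    then have "u \<in> Sn n" "z \<in> Sn n"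
      using split_pair[OF S(2) uz] S(1) neighboursD[OF sp] by blast+
    moreover have "u \<circ> inv w \<circ> z = u \<circ> inv w' \<circ> z"
      using eq by (simp add: pair_centre_def uz)
    ultimately have "inv w = inv w'"
      using comp_cancel_bij Sn_bij by blast
    then show "w = w'"
      using w Sn_bij by (metis inv_inv_eq)
  qed
  show "(\<lambda>(w, S). (pair_centre w S, S)) ` (SIGMA w:Sn n. {S. S \<subseteq> neighbours E w \<and> card S = 2})
    \<subseteq> (SIGMA x:Sn n. \<Union>i\<in>{0..n}. Gx_edges E n i x)"
  proof clarsimp
    fix w S
    assume S: "S \<subseteq> neighbours E w" "card S = 2"
    obtain u z where uz: "split_pair S = (u, z)"
      by fastforce
    with split_pair[OF S(2) uz] S(1) neighbour_pair_Gx_edge[OF sp, of u w z]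
    show "pair_centre w S \<in> Sn n \<and> (\<exists>i\<in>{0..n}. S \<in> Gx_edges E n i (pair_centre w S))"
      by (simp add: pair_centre_def)
  qed
  show "finite (SIGMA x:Sn n. \<Union>i\<in>{0..n}. Gx_edges E n i x)"
    by (simp add: finite_Sn finite_Gx_edges)
qed

theorem mainTheorem7:
  fixes n :: nat and E :: "(nat \<Rightarrow> nat) set set"
  assumes "n \<ge> 3" and "spanning_subgraph n E"
  shows "(\<Sum>x\<in>Sn n. \<Sum>i=0..n. card (Gx_edges E n i x)) \<ge> (\<Sum>w\<in>Sn n. deg E w choose 2)"
proof -
  have "(\<Sum>w\<in>Sn n. deg E w choose 2) = card (SIGMA w:Sn n. {S. S \<subseteq> neighbours E w \<and> card S = 2})"
    using assms(2) by (simp add: card_SigmaI finite_Sn finite_neighbours n_subsets deg_eq_card_neighbours)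
  also have "\<dots> \<le> card (SIGMA x:Sn n. \<Union>i\<in>{0..n}. Gx_edges E n i x)"
    using card_neighbour_pairs_le[OF assms(2)] .
  also have "\<dots> = (\<Sum>x\<in>Sn n. card (\<Union>i\<in>{0..n}. Gx_edges E n i x))"
    by (simp add: card_SigmaI finite_Sn finite_Gx_edges)
  also have "\<dots> \<le> (\<Sum>x\<in>Sn n. \<Sum>i=0..n. card (Gx_edges E n i x))"
    by (intro sum_mono card_UN_le) simp
  finally show ?thesis .
qed

end
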